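(* Let $\boldsymbol\theta^*\in\mathbb{R}^d$ and $\mathbf Y\sim\tfrac12N(-\boldsymbol\theta^*,I_d)+\tfrac12N(\boldsymbol\theta^*,I_d)$. Let $\mathbf U\in\mathbb{R}^{d\times k}$ with $\mathbf U^\top\mathbf U=I_k$, and let $\mathbf d\in\mathbb{R}^d$ be such that $\boldsymbol\theta^*$ and $\mathbf d$ lie in the range of $\mathbf U$. Then for any $\mathbf V\in\mathbb{R}^{d\times l}$ with $\mathbf V^\top\mathbf U=\mathbf 0$ and any $\mathbf c\in\mathbb{R}^d$, $$\mathbf V^\top\,\mathbb{E}\big[w_d(\mathbf Y-\mathbf c,\mathbf d)\mathbf Y\big]=\mathbf 0.$$
   Context: $w_d(\mathbf y,\boldsymbol\theta)=\frac{e^{\langle\mathbf y,\boldsymbol\theta\rangle}}{e^{\langle\mathbf y,\boldsymbol\theta\rangle}+e^{-\langle\mathbf y,\boldsymbol\theta\rangle}}$ for $\mathbf y,\boldsymbol\theta\in\mathbb{R}^d$. *)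

theory Defs
  imports "HOL-Probability.Probability"
begin

definition w_d :: "real ^ 'n \<Rightarrow> real ^ 'n \<Rightarrow> real" where
  "w_d y \<theta> = exp (y \<bullet> \<theta>) / (exp (y \<bullet> \<theta>) + exp (- (y \<bullet> \<theta>)))"

definition mvn_id_density :: "real ^ 'n \<Rightarrow> real ^ 'n \<Rightarrow> real" where
  "mvn_id_density \<mu> y = (\<Prod>i\<in>UNIV. normal_density (\<mu> $ i) 1 (y $ i))"

definition sym_mixture_density :: "real ^ 'n \<Rightarrow> real ^ 'n \<Rightarrow> real" where
  "sym_mixture_density \<theta> y = 1/2 * mvn_id_density (- \<theta>) y + 1/2 * mvn_id_density \<theta> y"

end

theory Submission
  imports Defs
begin

text \<open>
  Let \<open>S\<close> be the reflection through the column space of \<open>U\<close>, i.e. \<open>S = 2 U U\<^sup>T - I\<close>.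
  It is orthogonal and fixes \<open>\<theta>*\<close> and \<open>d\<close>, so it preserves the mixture density (which only
  depends on the distances to \<open>\<plusminus>\<theta>*\<close>) and the weight \<open>w_d(y - c, d)\<close> (which only depends
  on \<open>\<langle>y, d\<rangle>\<close>). Since Lebesgue measure is invariant under orthogonal maps, \<open>SY\<close> has the same
  law as \<open>Y\<close>, and therefore the expectation \<open>E\<close> of \<open>w_d(Y - c, d) Y\<close> satisfies \<open>SE = E\<close>. But
  \<open>V\<^sup>T S = -V\<^sup>T\<close> because \<open>V\<^sup>T U = 0\<close>, hence \<open>V\<^sup>T E = -V\<^sup>T E = 0\<close>.
\<close>

lemma linear_borel_measurable:
  fixes f :: "'a::euclidean_space \<Rightarrow> 'b::euclidean_space"
  shows "linear f \<Longrightarrow> f \<in> borel_measurable borel"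
  by (simp add: linear_continuous_on linear_conv_bounded_linear borel_measurable_continuous_onI)

lemma prod_Basis_inner_cart:
  "(\<Prod>b\<in>Basis. x \<bullet> b) = (\<Prod>i\<in>UNIV. x $ i)" for x :: "real ^ 'n"
  by (simp add: Basis_vec_def cart_eq_inner_axis axis_eq_axis prod.UNION_disjoint)

lemma inner_reindex:
  fixes h :: "'b::finite \<Rightarrow> 'a::finite"
  assumes "bij h"
  shows "(\<chi> j. x $ h j) \<bullet> ((\<chi> j. y $ h j) :: real^'b) = x \<bullet> (y :: real^'a)"
  using sum.reindex_bij_betw[OF assms, of "\<lambda>i. x $ i * y $ i"] by (simp add: inner_vec_def)

lemma vimage_box_reindex:
  fixes h :: "'b::finite \<Rightarrow> 'a::finite"
  assumes "bij h"
  shows "(\<lambda>x::real^'a. (\<chi> j. x $ h j) :: real^'b) -` box l u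
           = box (\<chi> i. l $ inv h i) (\<chi> i. u $ inv h i)"
proof (intro set_eqI iffI)
  fix x :: "real^'a"
  assume "x \<in> (\<lambda>x. (\<chi> j. x $ h j) :: real^'b) -` box l u"
  then have "l $ j < x $ h j \<and> x $ h j < u $ j" for j
    by (simp add: mem_box_cart)
  from this[of "inv h _"] show "x \<in> box (\<chi> i. l $ inv h i) (\<chi> i. u $ inv h i)"
    by (simp add: mem_box_cart surj_f_inv_f[OF bij_is_surj[OF assms]])
next
  fix x :: "real^'a"
  assume "x \<in> box (\<chi> i. l $ inv h i) (\<chi> i. u $ inv h i)"
  then have "l $ inv h i < x $ i \<and> x $ i < u $ inv h i" for i
    by (simp add: mem_box_cart)
  from this[of "h _"] show "x \<in> (\<lambda>x. (\<chi> j. x $ h j) :: real^'b) -` box l u"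
    by (simp add: mem_box_cart inv_f_f[OF bij_is_inj[OF assms]])
qed

lemma lborel_distr_reindex:
  fixes h :: "'b::finite \<Rightarrow> 'a::finite"
  assumes h: "bij h"
  shows "distr lborel borel (\<lambda>x::real^'a. (\<chi> j. x $ h j) :: real^'b) = lborel"
    (is "distr lborel borel ?R = _")
proof (rule lborel_eqI[symmetric])
  fix l u :: "real^'b"
  assume box_le: "\<And>b. b \<in> Basis \<Longrightarrow> l \<bullet> b \<le> u \<bullet> b"
  have le: "l $ j \<le> u $ j" for j
    using box_le[of "axis j 1"] by (auto simp: inner_axis Basis_vec_def)
  have meas: "?R \<in> lborel \<rightarrow>\<^sub>M borel"
    using linear_borel_measurable[of ?R] by (auto simp: linear_iff vec_eq_iff)
  have "emeasure (distr lborel borel ?R) (box l u)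
          = emeasure lborel (box (\<chi> i. l $ inv h i) (\<chi> i. u $ inv h i) :: (real^'a) set)"
    by (simp add: emeasure_distr[OF meas] vimage_box_reindex[OF h])
  also have "\<dots> = (\<Prod>i\<in>UNIV. u $ inv h i - l $ inv h i)"
  proof -
    have "(\<chi> i. l $ inv h i) \<bullet> b \<le> (\<chi> i. u $ inv h i) \<bullet> b" if "b \<in> Basis" for b
      using that le by (auto simp: Basis_vec_def inner_axis)
    then show ?thesis by (simp add: prod_Basis_inner_cart)
  qed
  also have "\<dots> = (\<Prod>b\<in>Basis. (u - l) \<bullet> b)"
    using prod.reindex_bij_betw[OF bij_imp_bij_inv[OF h], of "\<lambda>j. u $ j - l $ j"]
    by (simp add: prod_Basis_inner_cart)
  finally show "emeasure (distr lborel borel ?R) (box l u) = (\<Prod>b\<in>Basis. (u - l) \<bullet> b)" .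
qed simp

lemma lborel_distr_orthogonal_transformation_wellorder:
  fixes f :: "real^'n::{finite,wellorder} \<Rightarrow> real^'n::_"
  assumes f: "orthogonal_transformation f"
  shows "distr lborel borel f = lborel"
proof (rule lborel_eqI[symmetric])
  fix l u :: "real^'n::_"
  assume box_le: "\<And>b. b \<in> Basis \<Longrightarrow> l \<bullet> b \<le> u \<bullet> b"
  have meas: "f \<in> lborel \<rightarrow>\<^sub>M borel"
    using f by (simp add: linear_borel_measurable orthogonal_transformation_linear)
  have g: "orthogonal_transformation (inv f)"
    using f by (rule orthogonal_transformation_inv)
  have "f -` box l u = inv f ` box l u"
    using f by (simp add: bij_vimage_eq_inv_image orthogonal_transformation_bij)
  then have "emeasure lborel (f -` box l u) = emeasure lebesgue (inv f ` box l u)"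
    using measurable_sets[OF meas, of "box l u"] by (simp add: emeasure_completion)
  also have "\<dots> = measure lebesgue (inv f ` box l u)"
    using measurable_orthogonal_image[OF g] by (simp add: emeasure_eq_measure2)
  also have "\<dots> = measure lebesgue (box l u)"
    using measure_orthogonal_image[OF g] by simp
  also have "\<dots> = emeasure lebesgue (box l u)"
    by (simp add: emeasure_eq_measure2)
  also have "\<dots> = emeasure lborel (box l u)"
    by (simp add: emeasure_completion)
  finally have "emeasure lborel (f -` box l u) = emeasure lborel (box l u)" .
  then show "emeasure (distr lborel borel f) (box l u) = (\<Prod>b\<in>Basis. (u - l) \<bullet> b)"
    using box_le by (simp add: emeasure_distr[OF meas])
qed simp

text \<open>
  The change-of-variables results of the library are stated for index types of class
  \<open>wellorder\<close>. A finite type is put into that class by copying it and ordering the copy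
  through an enumeration; relabelling coordinates then transfers the results back.
\<close>

typedef 'a ranked = "UNIV :: 'a set" ..

instance ranked :: (finite) finite
proof
  show "finite (UNIV :: 'a ranked set)"
    by (simp add: type_definition.univ[OF type_definition_ranked])
qed

definition rank :: "'a::finite ranked \<Rightarrow> nat" where
  "rank x = to_nat_on UNIV (Rep_ranked x)"

lemma rank_inject: "rank x = rank y \<longleftrightarrow> x = y"
  by (simp add: rank_def countable_finite Rep_ranked_inject)

instantiation ranked :: (finite) linorder
begin
definition "x \<le> y \<longleftrightarrow> rank x \<le> rank y" for x y :: "'a ranked"
definition "x < y \<longleftrightarrow> rank x < rank y" for x y :: "'a ranked"
instance
proof
  fix x y :: "'a ranked"
  show "x \<le> y \<Longrightarrow> y \<le> x \<Longrightarrow> x = y"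
    by (simp add: less_eq_ranked_def flip: rank_inject)
qed (auto simp: less_eq_ranked_def less_ranked_def)
end

instance ranked :: (finite) wellorder
proof
  fix P :: "'a ranked \<Rightarrow> bool" and a
  assume step: "\<And>x. (\<And>y. y < x \<Longrightarrow> P y) \<Longrightarrow> P x"
  show "P a"
  proof (induct "rank a" arbitrary: a rule: less_induct)
    case less
    then show ?case
      using step by (auto simp: less_ranked_def)
  qed
qed

lemma bij_Rep_ranked: "bij Rep_ranked"
  by (rule o_bij[of Abs_ranked]) (auto simp: Abs_ranked_inverse Rep_ranked_inverse)

lemma bij_Abs_ranked: "bij Abs_ranked"
  by (rule o_bij[of Rep_ranked]) (auto simp: Abs_ranked_inverse Rep_ranked_inverse)

lemma lborel_distr_orthogonal_transformation:
  fixes f :: "real^'n \<Rightarrow> real^'n"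
  assumes f: "orthogonal_transformation f"
  shows "distr lborel borel f = lborel"
proof -
  define P :: "real^'n \<Rightarrow> real^'n ranked" where "P x = (\<chi> j. x $ Rep_ranked j)" for x
  define Q :: "real^'n ranked \<Rightarrow> real^'n" where "Q y = (\<chi> i. y $ Abs_ranked i)" for y
  define g where "g = P \<circ> f \<circ> Q"
  have P: "linear P" "distr lborel borel P = lborel" "P x \<bullet> P y = x \<bullet> y" for x y
    unfolding P_def[abs_def]
      by (auto simp: linear_iff vec_eq_iff)
        (rule lborel_distr_reindex inner_reindex bij_Rep_ranked)+
  have Q: "linear Q" "distr lborel borel Q = lborel" "Q x \<bullet> Q y = x \<bullet> y" for x y
    unfolding Q_def[abs_def]
      by (auto simp: linear_iff vec_eq_iff)
        (rule lborel_distr_reindex inner_reindex bij_Abs_ranked)+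
  have QP: "Q (P x) = x" for x
    by (simp add: P_def Q_def vec_eq_iff Abs_ranked_inverse)
  have "orthogonal_transformation g"
    using f P Q by (simp add: g_def orthogonal_transformation_def linear_compose)
  then have g: "linear g" "distr lborel borel g = lborel"
    by (simp_all add: orthogonal_transformation_linear lborel_distr_orthogonal_transformation_wellorder)
  have "f = Q \<circ> (g \<circ> P)"
    by (simp add: g_def fun_eq_iff QP)
  then have "distr lborel borel f = distr (distr (distr lborel borel P) borel g) borel Q"
    using P(1) Q(1) g(1) linear_compose[OF P(1) g(1)]
    by (simp add: distr_distr linear_borel_measurable)
  then show ?thesis
    by (simp add: P(2) Q(2) g(2))
qed

lemma mvn_id_density_eq:
  "mvn_id_density \<mu> y = (1 / sqrt (2 * pi)) ^ CARD('n) * exp (- (norm (y - \<mu>))\<^sup>2 / 2)"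
  for \<mu> y :: "real^'n"
proof -
  have "mvn_id_density \<mu> y = (\<Prod>i\<in>UNIV. 1 / sqrt (2 * pi) * exp (- (y $ i - \<mu> $ i)\<^sup>2 / 2))"
    by (simp add: mvn_id_density_def normal_density_def power2_commute)
  also have "\<dots> = (1 / sqrt (2 * pi)) ^ CARD('n) * exp (\<Sum>i\<in>UNIV. - (y $ i - \<mu> $ i)\<^sup>2 / 2)"
    by (subst exp_sum, simp, subst prod.distrib, simp only: prod_constant)
  also have "(\<Sum>i\<in>UNIV. - (y $ i - \<mu> $ i)\<^sup>2 / 2) = - (norm (y - \<mu>))\<^sup>2 / 2"
    unfolding power2_norm_eq_inner by (simp add: inner_vec_def sum_divide_distrib sum_negf power2_eq_square)
  finally show ?thesis .
qed

lemma mvn_id_density_orthogonal_transformation: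
  fixes f :: "real^'n \<Rightarrow> real^'n"
  assumes "orthogonal_transformation f"
  shows "mvn_id_density (f \<mu>) (f y) = mvn_id_density \<mu> y"
proof -
  have "f y - f \<mu> = f (y - \<mu>)"
    using assms by (simp add: linear_diff orthogonal_transformation_linear)
  then show ?thesis
    by (simp add: mvn_id_density_eq orthogonal_transformation_norm[OF assms])
qed

lemma sym_mixture_density_orthogonal_transformation:
  fixes f :: "real^'n \<Rightarrow> real^'n"
  assumes f: "orthogonal_transformation f" and "f \<theta> = \<theta>"
  shows "sym_mixture_density \<theta> (f y) = sym_mixture_density \<theta> y"
proof -
  have "f (- \<theta>) = - \<theta>"
    using assms by (simp add: linear_neg orthogonal_transformation_linear)
  then show ?thesis
    using mvn_id_density_orthogonal_transformation[OF f] \<open>f \<theta> = \<theta>\<close>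
    by (metis sym_mixture_density_def)
qed

lemma w_d_orthogonal_transformation:
  fixes f :: "real^'n \<Rightarrow> real^'n"
  assumes "orthogonal_transformation f" and "f d = d"
  shows "w_d (f y - c) d = w_d (y - c) d"
proof -
  have "f y \<bullet> d = f y \<bullet> f d"
    using assms(2) by simp
  also have "\<dots> = y \<bullet> d"
    using assms(1) by (simp add: orthogonal_transformation_def)
  finally have "f y \<bullet> d = y \<bullet> d" .
  then show ?thesis by (simp add: w_d_def inner_diff_left)
qed

lemma distr_orthogonal_transformation_eq:
  fixes Y :: "'w \<Rightarrow> real^'n"
  assumes Y: "distributed M lborel Y p"
    and f: "orthogonal_transformation f" and p: "\<And>y. p (f y) = p y"
  shows "distr M lborel (\<lambda>\<omega>. f (Y \<omega>)) = distr M lborel Y"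
proof -
  have f_meas: "f \<in> lborel \<rightarrow>\<^sub>M lborel"
    using linear_borel_measurable[OF orthogonal_transformation_linear[OF f]] by simp
  have f_lborel: "distr lborel lborel f = lborel"
    using lborel_distr_orthogonal_transformation[OF f] by (simp cong: distr_cong)
  have "density lborel p = density (distr lborel lborel f) p"
    by (simp only: f_lborel)
  also have "\<dots> = distr (density lborel (\<lambda>y. p (f y))) lborel f"
    by (rule density_distr[OF distributed_borel_measurable[OF Y] f_meas])
  also have "\<dots> = distr (distr M lborel Y) lborel f"
    by (simp only: p distributed_distr_eq_density[OF Y])
  also have "\<dots> = distr M lborel (\<lambda>\<omega>. f (Y \<omega>))"
    by (simp add: distr_distr[OF f_meas distributed_measurable[OF Y]] comp_def)
  finally show ?thesis
    by (simp only: distributed_distr_eq_density[OF Y])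
qed

lemma integral_fixed_by_orthogonal_symmetry:
  fixes Y :: "'w \<Rightarrow> real^'n" and g :: "real^'n \<Rightarrow> real^'n"
  assumes Y: "distributed M lborel Y p"
    and f: "orthogonal_transformation f" and p: "\<And>y. p (f y) = p y"
    and g: "g \<in> borel_measurable borel" and fg: "\<And>y. g (f y) = f (g y)"
  shows "f (\<integral>\<omega>. g (Y \<omega>) \<partial>M) = (\<integral>\<omega>. g (Y \<omega>) \<partial>M)"
proof -
  have Y_meas: "Y \<in> M \<rightarrow>\<^sub>M lborel" "(\<lambda>\<omega>. f (Y \<omega>)) \<in> M \<rightarrow>\<^sub>M lborel"
    using distributed_measurable[OF Y] linear_borel_measurable[OF orthogonal_transformation_linear[OF f]]
    by auto
  have "f (\<integral>\<omega>. g (Y \<omega>) \<partial>M) = (\<integral>\<omega>. f (g (Y \<omega>)) \<partial>M)"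
  proof (rule integral_bounded_linear'[symmetric])
    show "bounded_linear f" "bounded_linear (inv f)"
      using f orthogonal_transformation_inv[OF f]
      by (simp_all add: orthogonal_transformation_linear flip: linear_conv_bounded_linear)
    show "\<forall>x. inv f (f x) = x"
      using f by (simp add: orthogonal_transformation_inj)
  qed
  also have "\<dots> = (\<integral>\<omega>. g (f (Y \<omega>)) \<partial>M)"
    by (simp add: fg)
  also have "\<dots> = (\<integral>y. g y \<partial>distr M lborel (\<lambda>\<omega>. f (Y \<omega>)))"
    using g Y_meas(2) by (simp add: integral_distr)
  also have "\<dots> = (\<integral>y. g y \<partial>distr M lborel Y)"
    by (simp only: distr_orthogonal_transformation_eq[OF Y f p])
  also have "\<dots> = (\<integral>\<omega>. g (Y \<omega>) \<partial>M)"
    using g Y_meas(1) by (simp add: integral_distr)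
  finally show ?thesis .
qed

lemma orthogonal_transformation_reflection:
  fixes P :: "'a::real_inner \<Rightarrow> 'a"
  assumes P: "linear P" and idem: "\<And>x. P (P x) = P x"
    and self_adjoint: "\<And>x y. P x \<bullet> y = x \<bullet> P y"
  shows "orthogonal_transformation (\<lambda>y. 2 *\<^sub>R P y - y)"
proof -
  have "linear (\<lambda>y. 2 *\<^sub>R P y - y)"
    using P by (intro linear_compose_sub linear_compose_scale_right linear_ident)
  moreover have "(2 *\<^sub>R P v - v) \<bullet> (2 *\<^sub>R P w - w) = v \<bullet> w" for v w
  proof -
    have "P v \<bullet> P w = v \<bullet> P w" "P v \<bullet> w = v \<bullet> P w"
      using self_adjoint idem by metis+
    then show ?thesis
      by (simp add: inner_diff_left inner_diff_right algebra_simps)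
  qed
  ultimately show ?thesis
    by (simp add: orthogonal_transformation_def)
qed

definition col_space_reflection :: "real^'k^'n \<Rightarrow> real^'n \<Rightarrow> real^'n" where
  "col_space_reflection U y = 2 *\<^sub>R (U *v (transpose U *v y)) - y"

lemma orthogonal_transformation_col_space_reflection:
  assumes U: "transpose U ** U = mat 1"
  shows "orthogonal_transformation (col_space_reflection U)"
proof -
  have "linear (\<lambda>y. U *v (transpose U *v y))"
    using linear_compose[OF matrix_vector_mul_linear[of "transpose U"] matrix_vector_mul_linear[of U]]
    by (simp only: o_def)
  moreover have "U *v (transpose U *v (U *v (transpose U *v x))) = U *v (transpose U *v x)" for x
    by (simp only: matrix_vector_mul_assoc[of "transpose U" U] U matrix_vector_mul_lid)
  moreover have "(U *v (transpose U *v x)) \<bullet> y = x \<bullet> (U *v (transpose U *v y))" for x y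
    by (metis dot_lmul_matrix inner_commute transpose_matrix_vector)
  ultimately show ?thesis
    unfolding col_space_reflection_def[abs_def] by (rule orthogonal_transformation_reflection)
qed

lemma col_space_reflection_range:
  assumes "transpose U ** U = mat 1"
  shows "col_space_reflection U (U *v z) = U *v z"
  by (simp add: col_space_reflection_def matrix_vector_mul_assoc assms scaleR_2
      del: transpose_matrix_vector)

lemma col_space_reflection_orthogonal_complement:
  assumes "transpose V ** U = 0"
  shows "transpose V *v col_space_reflection U y = - (transpose V *v y)"
  by (simp add: col_space_reflection_def matrix_vector_mult_diff_distrib matrix_vector_mult_scaleR
      matrix_vector_mul_assoc matrix_mul_assoc assms del: transpose_matrix_vector)

theorem lemma6:
  fixes M :: "'w measure"
    and Y :: "'w \<Rightarrow> real ^ 'n"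
    and \<theta>star d c :: "real ^ 'n"
    and U :: "real ^ 'k ^ 'n"
    and V :: "real ^ 'l ^ 'n"
  assumes "prob_space M"
    and "distributed M lborel Y (sym_mixture_density \<theta>star)"
    and "transpose U ** U = mat 1"
    and "\<theta>star \<in> range (\<lambda>z. U *v z)"
    and "d \<in> range (\<lambda>z. U *v z)"
    and "transpose V ** U = 0"
  shows "transpose V *v (integral\<^sup>L M (\<lambda>\<omega>. w_d (Y \<omega> - c) d *\<^sub>R Y \<omega>)) = 0"
proof -
  define S where "S = col_space_reflection U"
  have S: "orthogonal_transformation S" "S \<theta>star = \<theta>star" "S d = d"
    using assms(3-5) by (auto simp: S_def orthogonal_transformation_col_space_reflection
        col_space_reflection_range)
  define E where "E = (\<integral>\<omega>. w_d (Y \<omega> - c) d *\<^sub>R Y \<omega> \<partial>M)"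
  have "S E = E"
    unfolding E_def
  proof (rule integral_fixed_by_orthogonal_symmetry[OF assms(2) S(1)])
    show "(\<lambda>y. w_d (y - c) d *\<^sub>R y) \<in> borel_measurable borel"
      unfolding w_d_def by measurable
  qed (simp_all add: S sym_mixture_density_orthogonal_transformation w_d_orthogonal_transformation
      linear_scale orthogonal_transformation_linear)
  then have "transpose V *v E = - (transpose V *v E)"
    using col_space_reflection_orthogonal_complement[OF assms(6)] by (metis S_def)
  then show ?thesis
    by (simp add: E_def vec_eq_iff)
qed

end
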